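(* Let $K$ be a uniformly bounded strictly positive definite kernel on ${\mathscr X}$, $\mu$ a probability measure on ${\mathscr X}$, $r=(r_0,\dots,r_p)^T$ bounded measurable functions with $r_0\equiv1$ and $\mathbf M_r=\int r\,r^T\,d\mu$ nonsingular, and $x_1,\dots,x_n\in{\mathscr X}$ pairwise distinct. Take $h=r$, so $\mathbf H_n=\mathbf R_n$ and $\mathbf B(\mu)=\mathbf M_r$. Assume $\mathbf R_n$ has full column rank and $\widetilde{\mathbf K}_n$ is nonsingular. Then for every $y\in\mathbb{R}^n$, with $\widehat{\mathbf I}_n$ and $\mathbf V_n$ as defined in the context, $$\widehat{\mathbf I}_n=\mathbf M_r(\mathbf R_n^T\widetilde{\mathbf K}_n^{-1}\mathbf R_n)^{-1}\mathbf R_n^T\widetilde{\mathbf K}_n^{-1}y,\qquad \mathbf V_n=\mathbf M_r(\mathbf R_n^T\widetilde{\mathbf K}_n^{-1}\mathbf R_n)^{-1}\mathbf M_r.$$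
   Context: ${\mathscr X}$ is a nonempty measurable space; $K:{\mathscr X}\times{\mathscr X}\to\mathbb{R}$ is symmetric, measurable, uniformly bounded ($\sup|K|<\infty$) and strictly positive definite ($\mathbf K_n=(K(x_i,x_j))_{i,j}$ positive definite for pairwise distinct points). Let $\mathbf R_n=(r_j(x_i))_{i=1..n,\,j=0..p}$, $\mathbf k_n(x)=(K(x,x_1),\dots,K(x,x_n))^T$, $\mathbf P_n(\mu)=\int r(x)\mathbf k_n^T(x)\,d\mu(x)$ ($(p+1)\times n$), $\mathbf U(\mu)=\int\int r(x)r^T(x')K(x,x')\,d\mu(x)\,d\mu(x')$, $\hat\beta=(\mathbf R_n^T\mathbf K_n^{-1}\mathbf R_n)^{-1}\mathbf R_n^T\mathbf K_n^{-1}y$, $\widehat{\mathbf I}_n=\mathbf M_r\hat\beta+\mathbf P_n(\mu)\mathbf K_n^{-1}(y-\mathbf R_n\hat\beta)$, and $\mathbf V_n=\mathbf U(\mu)-\mathbf P_n(\mu)\mathbf K_n^{-1}\mathbf P_n^T(\mu)+[\mathbf M_r-\mathbf P_n(\mu)\mathbf K_n^{-1}\mathbf R_n](\mathbf R_n^T\mathbf K_n^{-1}\mathbf R_n)^{-1}[\mathbf M_r-\mathbf P_n(\mu)\mathbf K_n^{-1}\mathbf R_n]^T$. With $\mathbf u_\mu(x)=\int r(x')K(x',x)\,d\mu(x')$, the reduced kernel is $K_\mu(x,x')=K(x,x')-\mathbf u_\mu^T(x)\mathbf M_r^{-1}r(x')-r^T(x)\mathbf M_r^{-1}\mathbf u_\mu(x')+r^T(x)\mathbf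 M_r^{-1}\mathbf U(\mu)\mathbf M_r^{-1}r(x')$, and $\widetilde{\mathbf K}_n=(K_\mu(x_i,x_j))_{i,j=1}^n$. *)

theory Defs
  imports "HOL-Probability.Probability"
begin

definition spd_kernel :: "'a measure \<Rightarrow> ('a \<Rightarrow> 'a \<Rightarrow> real) \<Rightarrow> bool" where
  "spd_kernel M K \<longleftrightarrow>
     (\<forall>F c. finite F \<and> F \<subseteq> space M \<and> (\<exists>x\<in>F. c x \<noteq> (0::real)) \<longrightarrow>
        (\<Sum>x\<in>F. \<Sum>y\<in>F. c x * c y * K x y) > 0)"

definition Kmat :: "('a \<Rightarrow> 'a \<Rightarrow> real) \<Rightarrow> ('n::finite \<Rightarrow> 'a) \<Rightarrow> real^'n^'n" where
  "Kmat K xs = (\<chi> i j. K (xs i) (xs j))"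

definition Rmat :: "('a \<Rightarrow> real^'p::finite) \<Rightarrow> ('n::finite \<Rightarrow> 'a) \<Rightarrow> real^'p^'n" where
  "Rmat r xs = (\<chi> i j. r (xs i) $ j)"

definition Mr :: "'a measure \<Rightarrow> ('a \<Rightarrow> real^'p::finite) \<Rightarrow> real^'p^'p" where
  "Mr M r = (\<chi> j k. integral\<^sup>L M (\<lambda>x. r x $ j * r x $ k))"

definition Pmat :: "'a measure \<Rightarrow> ('a \<Rightarrow> 'a \<Rightarrow> real) \<Rightarrow> ('a \<Rightarrow> real^'p::finite) \<Rightarrow> ('n::finite \<Rightarrow> 'a) \<Rightarrow> real^'n^'p" where
  "Pmat M K r xs = (\<chi> j i. integral\<^sup>L M (\<lambda>x. r x $ j * K x (xs i)))"

definition Umat :: "'a measure \<Rightarrow> ('a \<Rightarrow> 'a \<Rightarrow> real) \<Rightarrow> ('a \<Rightarrow> real^'p::finite) \<Rightarrow> real^'p^'p" where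
  "Umat M K r = (\<chi> j k. integral\<^sup>L M (\<lambda>x. integral\<^sup>L M (\<lambda>x'. r x $ j * r x' $ k * K x x')))"

definition u_mu :: "'a measure \<Rightarrow> ('a \<Rightarrow> 'a \<Rightarrow> real) \<Rightarrow> ('a \<Rightarrow> real^'p::finite) \<Rightarrow> 'a \<Rightarrow> real^'p" where
  "u_mu M K r x = (\<chi> j. integral\<^sup>L M (\<lambda>x'. r x' $ j * K x' x))"

definition K_mu :: "'a measure \<Rightarrow> ('a \<Rightarrow> 'a \<Rightarrow> real) \<Rightarrow> ('a \<Rightarrow> real^'p::finite) \<Rightarrow> 'a \<Rightarrow> 'a \<Rightarrow> real" where
  "K_mu M K r x x' =
     K x x' - u_mu M K r x \<bullet> (matrix_inv (Mr M r) *v r x')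
            - r x \<bullet> (matrix_inv (Mr M r) *v u_mu M K r x')
            + r x \<bullet> ((matrix_inv (Mr M r) ** Umat M K r ** matrix_inv (Mr M r)) *v r x')"

definition Ktilde :: "'a measure \<Rightarrow> ('a \<Rightarrow> 'a \<Rightarrow> real) \<Rightarrow> ('a \<Rightarrow> real^'p::finite) \<Rightarrow> ('n::finite \<Rightarrow> 'a) \<Rightarrow> real^'n^'n" where
  "Ktilde M K r xs = (\<chi> i j. K_mu M K r (xs i) (xs j))"

definition beta_hat :: "('a \<Rightarrow> 'a \<Rightarrow> real) \<Rightarrow> ('a \<Rightarrow> real^'p::finite) \<Rightarrow> ('n::finite \<Rightarrow> 'a) \<Rightarrow> real^'n \<Rightarrow> real^'p" where
  "beta_hat K r xs y =
     matrix_inv (transpose (Rmat r xs) ** matrix_inv (Kmat K xs) ** Rmat r xs)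
       *v ((transpose (Rmat r xs) ** matrix_inv (Kmat K xs)) *v y)"

definition I_hat :: "'a measure \<Rightarrow> ('a \<Rightarrow> 'a \<Rightarrow> real) \<Rightarrow> ('a \<Rightarrow> real^'p::finite) \<Rightarrow> ('n::finite \<Rightarrow> 'a) \<Rightarrow> real^'n \<Rightarrow> real^'p" where
  "I_hat M K r xs y =
     Mr M r *v beta_hat K r xs y
     + (Pmat M K r xs ** matrix_inv (Kmat K xs)) *v (y - Rmat r xs *v beta_hat K r xs y)"

definition V_n :: "'a measure \<Rightarrow> ('a \<Rightarrow> 'a \<Rightarrow> real) \<Rightarrow> ('a \<Rightarrow> real^'p::finite) \<Rightarrow> ('n::finite \<Rightarrow> 'a) \<Rightarrow> real^'p^'p" where
  "V_n M K r xs =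
     Umat M K r - Pmat M K r xs ** matrix_inv (Kmat K xs) ** transpose (Pmat M K r xs)
     + (Mr M r - Pmat M K r xs ** matrix_inv (Kmat K xs) ** Rmat r xs)
       ** matrix_inv (transpose (Rmat r xs) ** matrix_inv (Kmat K xs) ** Rmat r xs)
       ** transpose (Mr M r - Pmat M K r xs ** matrix_inv (Kmat K xs) ** Rmat r xs)"

end

theory Submission
  imports Defs
begin

text \<open>
  Let \<open>L\<close> be the weight matrix of the predictor (\<open>I_n = L y\<close>), \<open>V = V_n\<close>, and let
  \<open>Kt = K_n - P\<^sup>T M_r\<^sup>-\<^sup>1 R\<^sup>T - R M_r\<^sup>-\<^sup>1 P + R M_r\<^sup>-\<^sup>1 U M_r\<^sup>-\<^sup>1 R\<^sup>T\<close> be the reduced Gram matrix.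
  Two direct computations give \<open>L R = M_r\<close> (unbiasedness) and \<open>L Kt = V M_r\<^sup>-\<^sup>1 R\<^sup>T\<close>.
  Hence \<open>L = V M_r\<^sup>-\<^sup>1 R\<^sup>T Kt\<^sup>-\<^sup>1\<close>; multiplying by \<open>R\<close> yields \<open>V M_r\<^sup>-\<^sup>1 (R\<^sup>T Kt\<^sup>-\<^sup>1 R) = M_r\<close>,
  i.e. \<open>(R\<^sup>T Kt\<^sup>-\<^sup>1 R)\<^sup>-\<^sup>1 = M_r\<^sup>-\<^sup>1 V M_r\<^sup>-\<^sup>1\<close>, and substituting back gives both formulas.
\<close>

lemma matrix_inv:
  fixes A :: "'a::semiring_1^'n^'n"
  assumes "invertible A"
  shows matrix_inv_right: "A ** matrix_inv A = mat 1"
    and matrix_inv_left: "matrix_inv A ** A = mat 1"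
  using someI_ex[OF assms[unfolded invertible_def]] by (simp_all add: matrix_inv_def)

lemma matrix_inv_eqI:
  fixes A B :: "'a::field^'n^'n"
  assumes "B ** A = mat 1"
  shows "matrix_inv A = B"
proof -
  have AB: "A ** B = mat 1" using assms matrix_left_right_inverse by blast
  then have "invertible A" using assms invertible_def by blast
  then have "matrix_inv A = matrix_inv A ** (A ** B)" using AB by simp
  also have "\<dots> = B" by (simp add: matrix_mul_assoc matrix_inv_left \<open>invertible A\<close>)
  finally show ?thesis .
qed

lemma transpose_matrix_inv_symmetric:
  fixes A :: "'a::field^'n^'n"
  assumes "invertible A" "transpose A = A"
  shows "transpose (matrix_inv A) = matrix_inv A"
proof -
  have "transpose (matrix_inv A) ** A = mat 1"
    by (metis assms matrix_transpose_mul matrix_inv_right transpose_mat)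
  then show ?thesis by (metis matrix_inv_eqI)
qed

lemma invertible_if_ker_trivial:
  fixes A :: "'a::field^'n^'n"
  assumes "\<And>x. A *v x = 0 \<Longrightarrow> x = 0"
  shows "invertible A"
  using assms invertible_left_inverse matrix_left_invertible_ker by blast

lemma matrix_add_rdistrib: "((A::'a::semiring_1^'n^'m) + B) ** C = A ** C + B ** C"
  by (vector matrix_matrix_mult_def sum.distrib[symmetric] field_simps)

lemma matrix_diff_rdistrib: "((A::'a::ring_1^'n^'m) - B) ** C = A ** C - B ** C"
  by (vector matrix_matrix_mult_def sum_subtractf[symmetric] field_simps)

lemma matrix_diff_ldistrib: "(A::'a::ring_1^'n^'m) ** (B - C) = A ** B - A ** C"
  by (vector matrix_matrix_mult_def sum_subtractf[symmetric] field_simps)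

lemma transpose_diff: "transpose ((A::'a::ring_1^'n^'m) - B) = transpose A - transpose B"
  by (vector transpose_def)

lemma inner_matrix_vector_double_sum:
  "(x::real^'n) \<bullet> (A *v y) = (\<Sum>l\<in>UNIV. \<Sum>k\<in>UNIV. x$l * A$l$k * y$k)"
  by (simp add: inner_vec_def matrix_vector_mult_def sum_distrib_left mult.assoc)

lemma matrix_triple_product_nth:
  "((X::real^'l^'m) ** (A::real^'k^'l) ** (Y::real^'j^'k)) $ i $ j
     = (\<Sum>l\<in>UNIV. \<Sum>k\<in>UNIV. X$i$l * A$l$k * Y$k$j)"
  apply (simp add: matrix_matrix_mult_def sum_distrib_left sum_distrib_right mult.assoc)
  apply (subst sum.swap) by simp

lemma invertible_if_positive_definite:
  fixes A :: "real^'n^'n"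
  assumes "\<And>z. z \<noteq> 0 \<Longrightarrow> z \<bullet> (A *v z) > 0"
  shows "invertible A"
  by (rule invertible_if_ker_trivial) (metis assms inner_zero_right less_irrefl)

lemma invertible_gls_gram:
  fixes K :: "real^'n^'n" and R :: "real^'p^'n"
  assumes K_pd: "\<And>z. z \<noteq> 0 \<Longrightarrow> z \<bullet> (K *v z) > 0"
    and R_rank: "rank R = CARD('p)"
  shows "invertible (transpose R ** matrix_inv K ** R)"
proof (rule invertible_if_ker_trivial)
  fix v assume gram_v: "(transpose R ** matrix_inv K ** R) *v v = 0"
  define z where "z = matrix_inv K *v (R *v v)"
  have Kz: "K *v z = R *v v"
    using matrix_inv_right[OF invertible_if_positive_definite[OF K_pd]]
    by (simp add: z_def matrix_vector_mul_assoc matrix_mul_assoc)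
  have "z \<bullet> (K *v z) = (z v* R) \<bullet> v"
    by (simp add: Kz dot_lmul_matrix)
  also have "\<dots> = v \<bullet> ((transpose R ** matrix_inv K ** R) *v v)"
    by (simp add: z_def inner_commute flip: matrix_vector_mul_assoc)
  finally have "z \<bullet> (K *v z) = 0" using gram_v by simp
  then have "z = 0" using K_pd by fastforce
  then have "R *v v = 0" using Kz by simp
  then show "v = 0"
    using R_rank full_rank_injective[of R] by (metis inj_eq matrix_vector_mult_0_right)
qed

definition kriging_weights ::
    "real^'n^'n \<Rightarrow> real^'p^'n \<Rightarrow> real^'n^'p \<Rightarrow> real^'p^'p \<Rightarrow> real^'n^'p" where
  "kriging_weights K R P M =
     M ** matrix_inv (transpose R ** matrix_inv K ** R) ** transpose R ** matrix_inv K
     + P ** matrix_inv K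
     - P ** matrix_inv K ** R ** matrix_inv (transpose R ** matrix_inv K ** R)
         ** transpose R ** matrix_inv K"

definition kriging_variance ::
    "real^'n^'n \<Rightarrow> real^'p^'n \<Rightarrow> real^'n^'p \<Rightarrow> real^'p^'p \<Rightarrow> real^'p^'p \<Rightarrow> real^'p^'p" where
  "kriging_variance K R P M U =
     U - P ** matrix_inv K ** transpose P
     + (M - P ** matrix_inv K ** R) ** matrix_inv (transpose R ** matrix_inv K ** R)
         ** transpose (M - P ** matrix_inv K ** R)"

lemma kriging_weights_unbiased:
  fixes K :: "real^'n^'n" and R :: "real^'p^'n" and P :: "real^'n^'p" and M :: "real^'p^'p"
  assumes B_inv: "invertible (transpose R ** matrix_inv K ** R)"
  shows "kriging_weights K R P M ** R = M"
proof -
  define Ki where "Ki = matrix_inv K"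
  define B where "B = matrix_inv (transpose R ** Ki ** R)"
  have B_cancel: "X ** B ** transpose R ** Ki ** R = X" for X :: "real^'p^'q"
    using matrix_inv_left[OF B_inv] by (simp add: B_def Ki_def flip: matrix_mul_assoc)
  show ?thesis
    unfolding kriging_weights_def Ki_def[symmetric] B_def[symmetric]
    by (simp add: matrix_add_rdistrib matrix_diff_rdistrib B_cancel)
qed

lemma kriging_weights_reduced_gram:
  fixes K :: "real^'n^'n" and R :: "real^'p^'n" and P :: "real^'n^'p" and M U :: "real^'p^'p"
  assumes M_inv: "invertible M" and M_sym: "transpose M = M"
    and K_inv: "invertible K" and K_sym: "transpose K = K"
    and B_inv: "invertible (transpose R ** matrix_inv K ** R)"
  shows "kriging_weights K R P M
           ** (K - transpose P ** matrix_inv M ** transpose R - R ** matrix_inv M ** P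
               + R ** (matrix_inv M ** U ** matrix_inv M) ** transpose R)
         = kriging_variance K R P M U ** matrix_inv M ** transpose R"
proof -
  define Ki where "Ki = matrix_inv K"
  define A where "A = matrix_inv M"
  define B where "B = matrix_inv (transpose R ** Ki ** R)"
  have K_cancel: "X ** K ** Ki = X" "X ** Ki ** K = X" "K ** Ki = mat 1" "Ki ** K = mat 1"
    for X :: "real^'n^'q"
    using matrix_inv[OF K_inv] by (simp_all add: Ki_def flip: matrix_mul_assoc)
  have M_cancel: "X ** M ** A = X" "X ** A ** M = X" "M ** A = mat 1" "A ** M = mat 1"
    for X :: "real^'p^'q"
    using matrix_inv[OF M_inv] by (simp_all add: A_def flip: matrix_mul_assoc)
  have B_cancel: "X ** transpose R ** Ki ** R ** B = X" "X ** B ** transpose R ** Ki ** R = X"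
    for X :: "real^'p^'q"
    using matrix_inv[OF B_inv] by (simp_all add: B_def Ki_def flip: matrix_mul_assoc)
  have "transpose Ki = Ki"
    unfolding Ki_def using transpose_matrix_inv_symmetric K_inv K_sym by blast
  then have transpose_residual: "transpose (M - P ** Ki ** R) = M - transpose R ** Ki ** transpose P"
    by (simp add: transpose_diff matrix_transpose_mul M_sym matrix_mul_assoc)
  show ?thesis
    unfolding kriging_weights_def kriging_variance_def
      Ki_def[symmetric] A_def[symmetric] B_def[symmetric] transpose_residual
    by (simp add: matrix_add_rdistrib matrix_diff_rdistrib matrix_diff_ldistrib
        matrix_add_ldistrib matrix_mul_assoc K_cancel M_cancel B_cancel algebra_simps)
qed

lemma gls_gram_inverse_from_weights:
  fixes L :: "real^'n^'p" and R :: "real^'p^'n" and Kt :: "real^'n^'n" and M V :: "real^'p^'p"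
  assumes M_inv: "invertible M" and Kt_inv: "invertible Kt"
    and unbiased: "L ** R = M"
    and weights_Kt: "L ** Kt = V ** matrix_inv M ** transpose R"
  shows "L = M ** matrix_inv (transpose R ** matrix_inv Kt ** R) ** transpose R ** matrix_inv Kt"
    and "V = M ** matrix_inv (transpose R ** matrix_inv Kt ** R) ** M"
proof -
  have M_cancel: "X ** matrix_inv M ** M = X" for X :: "real^'p^'q"
    using matrix_inv_left[OF M_inv] by (simp flip: matrix_mul_assoc)
  have L_eq: "L = V ** matrix_inv M ** transpose R ** matrix_inv Kt"
    using weights_Kt matrix_inv_right[OF Kt_inv] by (metis matrix_mul_assoc matrix_mul_rid)
  have "matrix_inv M ** V ** matrix_inv M ** (transpose R ** matrix_inv Kt ** R)
      = matrix_inv M ** (L ** R)"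
    by (simp add: L_eq matrix_mul_assoc)
  also have "\<dots> = mat 1"
    using unbiased matrix_inv_left[OF M_inv] by simp
  finally have gram_inv:
    "matrix_inv (transpose R ** matrix_inv Kt ** R) = matrix_inv M ** V ** matrix_inv M"
    by (rule matrix_inv_eqI)
  show "L = M ** matrix_inv (transpose R ** matrix_inv Kt ** R) ** transpose R ** matrix_inv Kt"
    "V = M ** matrix_inv (transpose R ** matrix_inv Kt ** R) ** M"
    by (simp_all add: gram_inv L_eq matrix_mul_assoc matrix_inv_right[OF M_inv] M_cancel)
qed

lemma Ktilde_eq_matrix_form:
  "Ktilde M K r xs =
     Kmat K xs - transpose (Pmat M K r xs) ** matrix_inv (Mr M r) ** transpose (Rmat r xs)
     - Rmat r xs ** matrix_inv (Mr M r) ** Pmat M K r xs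
     + Rmat r xs ** (matrix_inv (Mr M r) ** Umat M K r ** matrix_inv (Mr M r))
         ** transpose (Rmat r xs)"
  unfolding vec_eq_iff
  by (simp add: Ktilde_def K_mu_def Kmat_def Rmat_def Pmat_def u_mu_def transpose_def
      inner_matrix_vector_double_sum matrix_triple_product_nth)

lemma transpose_Mr: "transpose (Mr M r) = Mr M r"
  unfolding vec_eq_iff by (simp add: transpose_def Mr_def mult.commute)

lemma transpose_Kmat:
  assumes "\<forall>x\<in>space M. \<forall>x'\<in>space M. K x x' = K x' x" and "\<forall>i. xs i \<in> space M"
  shows "transpose (Kmat K xs) = Kmat K xs"
  unfolding vec_eq_iff using assms by (simp add: transpose_def Kmat_def)

lemma Kmat_positive_definite:
  fixes xs :: "'n::finite \<Rightarrow> 'a"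
  assumes spd: "spd_kernel M K" and xs_in: "\<forall>i. xs i \<in> space M" and inj: "inj xs"
    and "z \<noteq> 0"
  shows "z \<bullet> (Kmat K xs *v z) > 0"
proof -
  define c where "c x = z $ inv xs x" for x
  obtain i where "z $ i \<noteq> 0" using \<open>z \<noteq> 0\<close> by (metis vec_eq_iff zero_index)
  then have "\<exists>x\<in>range xs. c x \<noteq> 0" by (auto simp: c_def inv_f_f[OF inj])
  then have "(\<Sum>x\<in>range xs. \<Sum>y\<in>range xs. c x * c y * K x y) > 0"
    using spd[unfolded spd_kernel_def, rule_format, of "range xs" c] xs_in by auto
  also have "(\<Sum>x\<in>range xs. \<Sum>y\<in>range xs. c x * c y * K x y)
      = (\<Sum>i\<in>UNIV. \<Sum>j\<in>UNIV. z$i * z$j * K (xs i) (xs j))"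
    by (simp add: sum.reindex[OF inj_on_subset[OF inj]] c_def inv_f_f[OF inj])
  also have "\<dots> = z \<bullet> (Kmat K xs *v z)"
    by (simp add: inner_matrix_vector_double_sum Kmat_def mult_ac)
  finally show ?thesis .
qed

lemma I_hat_eq_kriging_weights:
  "I_hat M K r xs y = kriging_weights (Kmat K xs) (Rmat r xs) (Pmat M K r xs) (Mr M r) *v y"
  unfolding I_hat_def beta_hat_def kriging_weights_def
  by (simp add: matrix_vector_mult_add_rdistrib matrix_vector_mult_diff_rdistrib
      matrix_vector_mult_diff_distrib matrix_mul_assoc flip: matrix_vector_mul_assoc)

lemma V_n_eq_kriging_variance:
  "V_n M K r xs = kriging_variance (Kmat K xs) (Rmat r xs) (Pmat M K r xs) (Mr M r) (Umat M K r)"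
  unfolding V_n_def kriging_variance_def ..

theorem lemmaB1:
  fixes M :: "'a measure" and K :: "'a \<Rightarrow> 'a \<Rightarrow> real"
    and r :: "'a \<Rightarrow> real^'p::finite" and i0 :: 'p
    and xs :: "'n::finite \<Rightarrow> 'a" and y :: "real^'n"
  assumes prob: "prob_space M"
    and K_sym: "\<forall>x\<in>space M. \<forall>x'\<in>space M. K x x' = K x' x"
    and K_meas: "(\<lambda>(x, x'). K x x') \<in> borel_measurable (M \<Otimes>\<^sub>M M)"
    and K_bdd: "\<exists>B. \<forall>x\<in>space M. \<forall>x'\<in>space M. \<bar>K x x'\<bar> \<le> B"
    and K_spd: "spd_kernel M K"
    and r_meas: "\<forall>j. (\<lambda>x. r x $ j) \<in> borel_measurable M"
    and r_bdd: "\<exists>B. \<forall>x\<in>space M. \<forall>j. \<bar>r x $ j\<bar> \<le> B"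
    and r0: "\<forall>x\<in>space M. r x $ i0 = 1"
    and Mr_inv: "invertible (Mr M r)"
    and xs_in: "\<forall>i. xs i \<in> space M"
    and xs_inj: "inj xs"
    and R_rank: "rank (Rmat r xs) = CARD('p)"
    and Kt_inv: "invertible (Ktilde M K r xs)"
  shows "I_hat M K r xs y =
           (Mr M r ** matrix_inv (transpose (Rmat r xs) ** matrix_inv (Ktilde M K r xs) ** Rmat r xs)
             ** transpose (Rmat r xs) ** matrix_inv (Ktilde M K r xs)) *v y
       \<and> V_n M K r xs =
           Mr M r ** matrix_inv (transpose (Rmat r xs) ** matrix_inv (Ktilde M K r xs) ** Rmat r xs)
             ** Mr M r"
proof -
  let ?K = "Kmat K xs" and ?R = "Rmat r xs" and ?P = "Pmat M K r xs" and ?M = "Mr M r"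
  have K_pd: "z \<noteq> 0 \<Longrightarrow> z \<bullet> (?K *v z) > 0" for z
    using Kmat_positive_definite[OF K_spd xs_in xs_inj] .
  have K_inv: "invertible ?K"
    using K_pd by (rule invertible_if_positive_definite)
  have B_inv: "invertible (transpose ?R ** matrix_inv ?K ** ?R)"
    using K_pd R_rank by (rule invertible_gls_gram)
  have weights_Kt: "kriging_weights ?K ?R ?P ?M ** Ktilde M K r xs
      = kriging_variance ?K ?R ?P ?M (Umat M K r) ** matrix_inv ?M ** transpose ?R"
    unfolding Ktilde_eq_matrix_form
    using kriging_weights_reduced_gram[OF Mr_inv transpose_Mr K_inv
        transpose_Kmat[OF K_sym xs_in] B_inv] .
  note representation = gls_gram_inverse_from_weights[OF Mr_inv Kt_inv
      kriging_weights_unbiased[OF B_inv] weights_Kt]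
  show ?thesis
    unfolding I_hat_eq_kriging_weights V_n_eq_kriging_variance
    using representation by simp
qed

end
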